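(* Let $a>b>0$, $c>0$, and for a real number $\mu\notin\{a^2,b^2,-c^2\}$ let $C_\mu=\{(x,y,z):\frac{x^2}{a^2-\mu}+\frac{y^2}{b^2-\mu}-\frac{z^2}{c^2+\mu}=0\}$ and $S_\mu=C_\mu\cap\mathbb{S}^2$; write $C=C_0$, $S=S_0$. Fix $\lambda$ with $-c^2<\lambda<b^2$ and let $F_\lambda$ be the linear map of $\mathbb{R}^3$ with diagonal matrix \[F_\lambda=\operatorname{diag}\Big(\tfrac{\sqrt{a^2-\lambda}}{a},\ \tfrac{\sqrt{b^2-\lambda}}{b},\ \tfrac{\sqrt{c^2+\lambda}}{c}\Big).\] Then $F_\lambda$ maps $S$ into $S_\lambda$. Moreover, if a point $v\in S$ belongs to $S_\mu$ for some $\mu\notin\{0,a^2,b^2,-c^2\}$, then $F_\lambda(v)$ also belongs to $S_\mu$.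
   Context: $\mathbb{S}^2$ is the unit sphere in $\mathbb{R}^3$. The conics $S_\mu$ form the confocal family of the spherical conic $S$. *)

theory Defs
  imports Complex_Main
begin

definition unit_sphere :: "(real \<times> real \<times> real) set" where
  "unit_sphere = {(x, y, z). x^2 + y^2 + z^2 = 1}"

definition confocal_cone :: "real \<Rightarrow> real \<Rightarrow> real \<Rightarrow> real \<Rightarrow> (real \<times> real \<times> real) set" where
  "confocal_cone a b c \<mu> =
     {(x, y, z). x^2 / (a^2 - \<mu>) + y^2 / (b^2 - \<mu>) - z^2 / (c^2 + \<mu>) = 0}"

definition spherical_conic :: "real \<Rightarrow> real \<Rightarrow> real \<Rightarrow> real \<Rightarrow> (real \<times> real \<times> real) set" where
  "spherical_conic a b c \<mu> = confocal_cone a b c \<mu> \<inter> unit_sphere"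

definition F_map :: "real \<Rightarrow> real \<Rightarrow> real \<Rightarrow> real \<Rightarrow> real \<times> real \<times> real \<Rightarrow> real \<times> real \<times> real" where
  "F_map a b c l = (\<lambda>(x, y, z). (sqrt (a^2 - l) / a * x, sqrt (b^2 - l) / b * y, sqrt (c^2 + l) / c * z))"

end

theory Submission
  imports Defs
begin

text \<open>Write \<open>A = a\<^sup>2, B = b\<^sup>2, C = c\<^sup>2\<close> and \<open>Q\<^sub>\<mu>\<close> for the quadratic form defining the cone
  \<open>C\<^sub>\<mu>\<close>. The map \<open>F\<^sub>\<lambda>\<close> multiplies the squared coordinates by \<open>(A - \<lambda>)/A\<close>, \<open>(B - \<lambda>)/B\<close>,
  \<open>(C + \<lambda>)/C\<close>. Hence \<open>Q\<^sub>\<lambda>(F\<^sub>\<lambda> v) = Q\<^sub>0(v)\<close> and \<open>|F\<^sub>\<lambda> v|\<^sup>2 = |v|\<^sup>2 - \<lambda> Q\<^sub>0(v)\<close>, so \<open>F\<^sub>\<lambda>\<close>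
  maps \<open>S\<close> to \<open>S\<^sub>\<lambda>\<close>. For \<open>\<mu> \<noteq> 0\<close> the partial fraction decomposition
  \<open>(A - \<lambda>)/(A (A - \<mu>)) = (1 - \<lambda>/\<mu>)/(A - \<mu>) + (\<lambda>/\<mu>)/A\<close> gives
  \<open>Q\<^sub>\<mu>(F\<^sub>\<lambda> v) = (1 - \<lambda>/\<mu>) Q\<^sub>\<mu>(v) + (\<lambda>/\<mu>) Q\<^sub>0(v)\<close>, which vanishes on \<open>S \<inter> S\<^sub>\<mu>\<close>.\<close>

definition sqnorm :: "real \<times> real \<times> real \<Rightarrow> real" where
  "sqnorm = (\<lambda>(x, y, z). x^2 + y^2 + z^2)"

definition cone_quadric :: "real \<Rightarrow> real \<Rightarrow> real \<Rightarrow> real \<Rightarrow> real \<times> real \<times> real \<Rightarrow> real" where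
  "cone_quadric a b c \<mu> = (\<lambda>(x, y, z). x^2 / (a^2 - \<mu>) + y^2 / (b^2 - \<mu>) - z^2 / (c^2 + \<mu>))"

lemma unit_sphere_eq: "unit_sphere = {v. sqnorm v = 1}"
  by (auto simp: unit_sphere_def sqnorm_def)

lemma confocal_cone_eq: "confocal_cone a b c \<mu> = {v. cone_quadric a b c \<mu> v = 0}"
  by (auto simp: confocal_cone_def cone_quadric_def)

lemma partial_fraction_split:
  fixes A l m :: real
  assumes "A \<noteq> 0" "A \<noteq> m" "m \<noteq> 0"
  shows "(A - l) / A / (A - m) = (1 - l/m) / (A - m) + (l/m) / A"
  using assms by (simp add: field_simps)

context
  fixes a b c l :: real
  assumes nonzero: "a \<noteq> 0" "b \<noteq> 0" "c \<noteq> 0"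
    and nonneg: "0 \<le> a^2 - l" "0 \<le> b^2 - l" "0 \<le> c^2 + l"
begin

lemma F_map_squares:
  "F_map a b c l (x, y, z) = (x', y', z') \<Longrightarrow>
     x'^2 = x^2 * ((a^2 - l) / a^2) \<and> y'^2 = y^2 * ((b^2 - l) / b^2) \<and> z'^2 = z^2 * ((c^2 + l) / c^2)"
  using nonneg by (auto simp: F_map_def power_mult_distrib power_divide)

lemma sqnorm_F_map: "sqnorm (F_map a b c l v) = sqnorm v - l * cone_quadric a b c 0 v"
proof -
  obtain x y z x' y' z' where v: "v = (x, y, z)" and Fv: "F_map a b c l (x, y, z) = (x', y', z')"
    by (metis prod_cases3)
  from F_map_squares[OF Fv] have "sqnorm (x', y', z')
      = x^2 * ((a^2 - l) / a^2) + y^2 * ((b^2 - l) / b^2) + z^2 * ((c^2 + l) / c^2)"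
    by (simp add: sqnorm_def)
  with nonzero show ?thesis
    by (simp add: v Fv sqnorm_def cone_quadric_def field_simps)
qed

lemma cone_quadric_F_map_self:
  assumes "a^2 \<noteq> l" "b^2 \<noteq> l" "c^2 + l \<noteq> 0"
  shows "cone_quadric a b c l (F_map a b c l v) = cone_quadric a b c 0 v"
proof -
  obtain x y z x' y' z' where v: "v = (x, y, z)" and Fv: "F_map a b c l (x, y, z) = (x', y', z')"
    by (metis prod_cases3)
  show ?thesis
    using F_map_squares[OF Fv] nonzero assms
    by (simp add: v Fv cone_quadric_def)
qed

lemma cone_quadric_F_map:
  assumes "\<mu> \<noteq> 0" "a^2 \<noteq> \<mu>" "b^2 \<noteq> \<mu>" "c^2 \<noteq> - \<mu>"
  shows "cone_quadric a b c \<mu> (F_map a b c l v)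
    = (1 - l/\<mu>) * cone_quadric a b c \<mu> v + (l/\<mu>) * cone_quadric a b c 0 v"
proof -
  obtain x y z x' y' z' where v: "v = (x, y, z)" and Fv: "F_map a b c l (x, y, z) = (x', y', z')"
    by (metis prod_cases3)
  have "c^2 + \<mu> \<noteq> 0" using assms by auto
  with nonzero \<open>\<mu> \<noteq> 0\<close>
  have "(c^2 + l) / c^2 / (c^2 + \<mu>) = (1 - l/\<mu>) / (c^2 + \<mu>) + (l/\<mu>) / c^2"
    by (simp add: divide_simps) (simp add: algebra_simps)
  moreover have "(a^2 - l) / a^2 / (a^2 - \<mu>) = (1 - l/\<mu>) / (a^2 - \<mu>) + (l/\<mu>) / a^2"
    "(b^2 - l) / b^2 / (b^2 - \<mu>) = (1 - l/\<mu>) / (b^2 - \<mu>) + (l/\<mu>) / b^2"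
    using partial_fraction_split nonzero assms by simp_all
  moreover from F_map_squares[OF Fv]
  have "cone_quadric a b c \<mu> (x', y', z') = x^2 * ((a^2 - l) / a^2 / (a^2 - \<mu>))
      + y^2 * ((b^2 - l) / b^2 / (b^2 - \<mu>)) - z^2 * ((c^2 + l) / c^2 / (c^2 + \<mu>))"
    by (simp add: cone_quadric_def)
  ultimately show ?thesis
    by (simp add: v Fv cone_quadric_def algebra_simps)
qed

end

theorem mainTheorem14:
  fixes a b c l :: real
  assumes "a > b" and "b > 0" and "c > 0" and "- (c^2) < l" and "l < b^2"
  shows "F_map a b c l ` spherical_conic a b c 0 \<subseteq> spherical_conic a b c l
    \<and> (\<forall>v \<mu>. v \<in> spherical_conic a b c 0 \<and> \<mu> \<notin> {0, a^2, b^2, - (c^2)}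
              \<and> v \<in> spherical_conic a b c \<mu> \<longrightarrow> F_map a b c l v \<in> spherical_conic a b c \<mu>)"
proof -
  have "b^2 < a^2" using assms by (simp add: power_strict_mono)
  then have nonzero: "a \<noteq> 0" "b \<noteq> 0" "c \<noteq> 0" and pos: "0 < a^2 - l" "0 < b^2 - l" "0 < c^2 + l"
    using assms by auto
  note nonneg = pos[THEN less_imp_le]
  have on_sphere: "F_map a b c l v \<in> unit_sphere" if "v \<in> spherical_conic a b c 0" for v
    using that sqnorm_F_map[OF nonzero nonneg, of v] by (simp add: spherical_conic_def unit_sphere_eq confocal_cone_eq)
  show ?thesis
    using on_sphere pos cone_quadric_F_map_self[OF nonzero nonneg] cone_quadric_F_map[OF nonzero nonneg]
    by (fastforce simp: spherical_conic_def confocal_cone_eq)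
qed

end
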